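(* Let $r_1,\dots,r_n\in\mathbb R$ and $r=\mathrm{diag}(r_1,\dots,r_n)$. For each $1\le i,k\le n$, $q_{i,k}$ interlaces $\sigma_k(r+tI)$: if $u_1\ge u_2\ge\cdots\ge u_k$ are the roots of $\sigma_k(r+tI)$ and $v_1\ge\cdots\ge v_{k-1}$ are the roots of $q_{i,k}$, then $u_k\le v_{k-1}\le u_{k-1}\le\cdots\le v_1\le u_1$.
   Context: $\sigma_k(r+tI)=\sum_{i_1<\cdots<i_k}(t+r_{i_1})\cdots(t+r_{i_k})$, and $q_{i,k}(t)=\sum_{j=0}^{k-1}(-1)^j\sigma_{k-1-j}(r+tI)(t+r_i)^j$ with $\sigma_0=1$; both are real-rooted. *)

theory Defs
  imports "HOL-Computational_Algebra.Polynomial" "HOL-Library.Multiset"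
begin

text \<open>sigma_k(r + tI) as a polynomial in t, where r = diag(r_1,...,r_n):
  the k-th elementary symmetric polynomial of t + r_1, ..., t + r_n.\<close>
definition sigma_poly :: "nat \<Rightarrow> (nat \<Rightarrow> real) \<Rightarrow> nat \<Rightarrow> real poly" where
  "sigma_poly n r k = (\<Sum>S \<in> {S. S \<subseteq> {1..n} \<and> card S = k}. \<Prod>i\<in>S. [:r i, 1:])"

definition q_poly :: "nat \<Rightarrow> (nat \<Rightarrow> real) \<Rightarrow> nat \<Rightarrow> nat \<Rightarrow> real poly" where
  "q_poly n r i k = (\<Sum>j<k. smult ((-1) ^ j) (sigma_poly n r (k - 1 - j) * [:r i, 1:] ^ j))"

definition is_root_list :: "real poly \<Rightarrow> real list \<Rightarrow> bool" where
  "is_root_list p xs \<longleftrightarrow> p \<noteq> 0 \<and> (\<forall>x. count (mset xs) x = order x p)"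

end

theory Submission
  imports Defs
begin

text \<open>Write \<open>E\<^sub>k(A)\<close> for \<open>\<sigma>\<^sub>k\<close> of the shifts \<open>t + r\<^sub>j\<close>, \<open>j \<in> A\<close>. The alternating sum \<open>q\<^sub>i\<^sub>,\<^sub>k\<close>
  telescopes to \<open>g = E\<^sub>k\<^sub>-\<^sub>1(A - {i})\<close>, and \<open>\<sigma>\<^sub>k = B + (t + r\<^sub>i) g\<close> with \<open>B = E\<^sub>k(A - {i})\<close>.
  Since \<open>E\<^sub>k(A)\<close> is a positive multiple of a derivative of \<open>E\<^sub>k\<^sub>+\<^sub>1(A)\<close>, Rolle's theorem makes
  all these polynomials real-rooted, and \<open>B' = m g\<close> with \<open>m = n - k\<close>. Hence
  \<open>m \<sigma>\<^sub>k = m B + (t + r\<^sub>i) B'\<close>, which is \<open>(t + r\<^sub>i)\<^sup>1\<^sup>-\<^sup>m\<close> times the derivative of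
  \<open>(t + r\<^sub>i)\<^sup>m B\<close>. Rolle's theorem for \<open>B\<close> and for \<open>(t + r\<^sub>i)\<^sup>m B\<close> bounds the numbers of roots
  of \<open>\<sigma>\<^sub>k\<close> and \<open>g\<close> above any point up to one, and the remaining ambiguity is resolved by
  parity: at a point that is not a root, the sign of a real-rooted polynomial with positive
  leading coefficient is \<open>(-1)\<close> to the number of roots above it, while
  \<open>\<sigma>\<^sub>k g = B g + (t + r\<^sub>i) g\<^sup>2\<close>.\<close>

section \<open>Counting elements above a threshold\<close>

definition count_greater :: "'a::linorder multiset \<Rightarrow> 'a \<Rightarrow> nat" where
  "count_greater M a = size (filter_mset (\<lambda>x. a < x) M)"

text \<open>\<open>interlaces V U\<close> encodes \<open>u\<^sub>j\<^sub>+\<^sub>1 \<le> v\<^sub>j \<le> u\<^sub>j\<close> for the decreasingly sorted elements.\<close>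
definition interlaces :: "'a::linorder multiset \<Rightarrow> 'a multiset \<Rightarrow> bool" where
  "interlaces V U \<longleftrightarrow>
     (\<forall>a. count_greater V a \<le> count_greater U a \<and> count_greater U a \<le> count_greater V a + 1)"

lemma count_greater_empty [simp]: "count_greater {#} a = 0"
  by (simp add: count_greater_def)

lemma count_greater_add_mset [simp]:
  "count_greater (add_mset x M) a = (if a < x then Suc (count_greater M a) else count_greater M a)"
  by (simp add: count_greater_def)

lemma count_greater_union [simp]: "count_greater (M + N) a = count_greater M a + count_greater N a"
  by (simp add: count_greater_def)

lemma count_greater_replicate_mset [simp]:
  "count_greater (replicate_mset m c) a = (if a < c then m else 0)"
  by (induction m) auto

lemma count_greater_mset_set:
  "finite A \<Longrightarrow> count_greater (mset_set A) a = card {x\<in>A. a < x}"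
  by (simp add: count_greater_def)

lemma count_greater_sorted_nth:
  assumes "sorted_wrt (\<ge>) xs" "j < length xs"
  shows "j < count_greater (mset xs) a \<longleftrightarrow> a < xs ! j"
  using assms
proof (induction xs arbitrary: j)
  case (Cons x xs)
  show ?case
  proof (cases "a < x")
    case True
    with Cons show ?thesis by (cases j) (auto simp del: One_nat_def)
  next
    case False
    then have "count_greater (mset xs) a = 0"
      using Cons.prems(1) by (auto simp: count_greater_def)
    moreover have "xs ! j' \<le> a" if "j' < length xs" for j'
      using Cons.prems(1) False that by (auto simp: not_less intro: order.trans)
    ultimately show ?thesis using False Cons.prems by (cases j) (auto simp: not_less)
  qed
qed simp

lemma interlaces_nth:
  fixes u v :: "'a::linorder list"
  assumes "sorted_wrt (\<ge>) u" "sorted_wrt (\<ge>) v" "length u = k" "length v = k - 1"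
    and "interlaces (mset v) (mset u)"
  shows "\<forall>j < k - 1. u ! (j + 1) \<le> v ! j \<and> v ! j \<le> u ! j"
proof (intro allI impI conjI)
  fix j assume j: "j < k - 1"
  note nth_u = count_greater_sorted_nth[OF assms(1)] and nth_v = count_greater_sorted_nth[OF assms(2)]
  note il = assms(5)[unfolded interlaces_def, rule_format]
  show "u ! (j + 1) \<le> v ! j"
    using nth_u[of "j + 1" "v ! j"] nth_v[of j "v ! j"] il[of "v ! j"] j assms(3,4) by fastforce
  show "v ! j \<le> u ! j"
    using nth_u[of j "u ! j"] nth_v[of j "u ! j"] il[of "u ! j"] j assms(3,4) by fastforce
qed

lemma interlaces_add_left: "interlaces V U \<Longrightarrow> interlaces (W + V) (W + U)"
  by (simp add: interlaces_def)

lemma interlaces_add_mset: "interlaces V (add_mset c V)"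
  by (simp add: interlaces_def)

lemma count_greater_eq_if_gap:
  assumes "\<And>x. x \<in># M \<Longrightarrow> \<not> (a < x \<and> x \<le> a')" "a \<le> a'"
  shows "count_greater M a' = count_greater M a"
proof -
  have "filter_mset (\<lambda>x. a' < x) M = filter_mset (\<lambda>x. a < x) M"
    using assms by (intro filter_mset_cong) force+
  then show ?thesis by (simp add: count_greater_def)
qed

lemma exists_gap_above:
  fixes a :: "'a::{dense_linorder,no_top}"
  assumes "finite S"
  obtains a' where "a < a'" "a' \<notin> S" "\<And>s. s \<in> S \<Longrightarrow> \<not> (a < s \<and> s \<le> a')"
proof (cases "{s\<in>S. a < s} = {}")
  case True
  obtain a' where "a < a'" using gt_ex by blast
  with True show ?thesis by (intro that) auto
next
  case False
  have fin: "finite {s\<in>S. a < s}" using assms by simp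
  obtain a' where "a < a'" "a' < Min {s\<in>S. a < s}"
    using dense Min_in[OF fin False] by blast
  moreover have "Min {s\<in>S. a < s} \<le> s" if "s \<in> S" "a < s" for s
    using fin that by simp
  ultimately show ?thesis by (intro that) force+
qed

text \<open>Counts of elements above a point are right-continuous step functions, so interlacing
  only needs to be checked away from a finite set containing all the elements.\<close>
lemma interlacesI_cofinite:
  fixes U V :: "'a::{dense_linorder,no_top} multiset"
  assumes "finite S" "set_mset U \<subseteq> S" "set_mset V \<subseteq> S"
    and "\<And>a. a \<notin> S \<Longrightarrow> count_greater V a \<le> count_greater U a \<and> count_greater U a \<le> count_greater V a + 1"
  shows "interlaces V U"
  unfolding interlaces_def
proof
  fix a :: 'a
  obtain a' where a': "a < a'" "a' \<notin> S" "\<And>s. s \<in> S \<Longrightarrow> \<not> (a < s \<and> s \<le> a')"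
    using exists_gap_above[OF assms(1), of a] by blast
  have "count_greater U a' = count_greater U a" "count_greater V a' = count_greater V a"
    using a' assms(2,3) by (auto intro!: count_greater_eq_if_gap)
  with assms(4)[OF a'(2)] show "count_greater V a \<le> count_greater U a \<and> count_greater U a \<le> count_greater V a + 1"
    by simp
qed

lemma prod_mset_diff_pos_iff:
  fixes a :: "'a::linordered_idom"
  assumes "a \<notin># M"
  shows "0 < (\<Prod>x\<in>#M. a - x) \<longleftrightarrow> even (count_greater M a)"
  using assms
proof (induction M)
  case (add x M)
  define P where "P = (\<Prod>y\<in>#M. a - y)"
  have "a \<noteq> x" "P \<noteq> 0" "0 < P \<longleftrightarrow> even (count_greater M a)"
    using add by (auto simp: P_def prod_mset_zero_iff)
  then show ?case
    by (cases "a < x") (auto simp: P_def[symmetric] zero_less_mult_iff)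
qed simp

section \<open>Real-rooted polynomials\<close>

definition real_rooted :: "real poly \<Rightarrow> bool" where
  "real_rooted p \<longleftrightarrow> p \<noteq> 0 \<and> size (proots p) = degree p"

lemma prod_proots_dvd: "(\<Prod>x\<in>#proots p. [:-x, 1:]) dvd (p :: 'a::idom poly)"
proof (induction p rule: poly_root_order_induct)
  case (no_roots p)
  then have "proots p = {#}"
    by (cases "p = 0") (auto intro!: multiset_eqI simp: order_root)
  then show ?case by simp
next
  case (root p x n)
  then have "p \<noteq> 0" by auto
  then have "proots ([:-x, 1:] ^ n * p) = replicate_mset n x + proots p"
    by (simp add: proots_mult proots_power)
  with root.IH show ?case
    by (simp add: mult_dvd_mono)
qed simp

lemma lead_coeff_prod_linear: "lead_coeff (\<Prod>x\<in>#M. [:-x, 1:]) = (1 :: 'a::idom)"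
  by (induction M) (simp_all add: lead_coeff_mult del: mult_pCons_left)

lemma degree_prod_linear: "degree (\<Prod>x\<in>#M. [:-x, 1:] :: 'a::idom poly) = size M"
proof (induction M)
  case (add x M)
  have "(\<Prod>x\<in>#M. [:-x, 1:] :: 'a poly) \<noteq> 0"
    using lead_coeff_prod_linear[of M] by auto
  with add.IH show ?case by (simp add: degree_mult_eq del: mult_pCons_left)
qed simp

lemma lead_coeff_pderiv:
  fixes p :: "'a::{comm_semiring_1,semiring_no_zero_divisors,semiring_char_0} poly"
  shows "lead_coeff (pderiv p) = of_nat (degree p) * lead_coeff p"
  by (cases "degree p") (simp_all add: degree_pderiv coeff_pderiv coeff_eq_0)

lemma real_rooted_decompose:
  assumes "real_rooted p"
  shows "smult (lead_coeff p) (\<Prod>x\<in>#proots p. [:-x, 1:]) = p"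
proof -
  let ?L = "\<Prod>x\<in>#proots p. [:-x, 1:]"
  have p: "p \<noteq> 0" "size (proots p) = degree p" using assms by (auto simp: real_rooted_def)
  obtain q where q: "p = ?L * q" using prod_proots_dvd by blast
  have L: "lead_coeff ?L = 1" "degree ?L = size (proots p)"
    by (rule lead_coeff_prod_linear, rule degree_prod_linear)
  have nz: "q \<noteq> 0" "?L \<noteq> 0" using p q by auto
  have "degree (?L * q) = degree ?L + degree q" by (rule degree_mult_eq[OF nz(2,1)])
  then have "degree q = 0" using p L q by simp
  moreover have "lead_coeff (?L * q) = lead_coeff q" using L by (simp add: lead_coeff_mult)
  ultimately have "q = [:lead_coeff p:]" using q by (metis degree_0_id)
  with q show ?thesis by simp
qed

lemma real_rooted_pos_iff:
  assumes "real_rooted p" "lead_coeff p > 0" "poly p a \<noteq> 0"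
  shows "0 < poly p a \<longleftrightarrow> even (count_greater (proots p) a)"
proof -
  have "poly p a = lead_coeff p * (\<Prod>x\<in>#proots p. a - x)"
    using arg_cong[OF real_rooted_decompose[OF assms(1)], of "\<lambda>q. poly q a"]
    by (simp add: poly_prod_mset)
  moreover have "a \<notin># proots p" using assms(1,3) by (simp add: real_rooted_def)
  ultimately show ?thesis
    using assms(2) prod_mset_diff_pos_iff by (simp add: zero_less_mult_iff)
qed

lemma real_rooted_smult_iff: "c \<noteq> 0 \<Longrightarrow> real_rooted (smult c p) \<longleftrightarrow> real_rooted p"
  by (simp add: real_rooted_def)

lemma real_rooted_mult_iff: "real_rooted (p * q) \<longleftrightarrow> real_rooted p \<and> real_rooted q"
  using size_proots_le[of p] size_proots_le[of q]
  by (cases "p = 0 \<or> q = 0") (auto simp: real_rooted_def proots_mult degree_mult_eq)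

lemma real_rooted_linear_power: "real_rooted ([:-c, 1:] ^ m)"
  by (simp add: real_rooted_def proots_power degree_power_eq)

lemma real_rooted_linear: "real_rooted [:a, 1:]"
  by (simp add: real_rooted_def)

lemma real_rooted_prod: "finite A \<Longrightarrow> (\<And>i. i \<in> A \<Longrightarrow> real_rooted (f i)) \<Longrightarrow> real_rooted (prod f A)"
  by (induction A rule: finite_induct) (simp_all add: real_rooted_mult_iff, simp add: real_rooted_def)

section \<open>Rolle's theorem and interlacing\<close>

lemma pderiv_gap_roots:
  fixes p :: "real poly"
  assumes "finite Z" "\<And>x. x \<in> Z \<Longrightarrow> poly p x = 0"
  obtains \<rho> where "\<And>z. z \<in> Z - {Min Z} \<Longrightarrow>
    \<rho> z < z \<and> (\<forall>w\<in>Z. w < z \<longrightarrow> w < \<rho> z) \<and> poly (pderiv p) (\<rho> z) = 0"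
proof -
  have "\<exists>y. y < z \<and> (\<forall>w\<in>Z. w < z \<longrightarrow> w < y) \<and> poly (pderiv p) y = 0" if "z \<in> Z - {Min Z}" for z
  proof -
    let ?W = "{x\<in>Z. x < z}"
    have "z \<in> Z" "z \<noteq> Min Z" "Z \<noteq> {}" using that by auto
    then have "Min Z \<in> ?W" using assms(1) by (simp add: order.not_eq_order_implies_strict)
    then have W: "finite ?W" "?W \<noteq> {}" using assms(1) by auto
    then have "Max ?W \<in> Z" "Max ?W < z" using Max_in[OF W] by auto
    moreover obtain y where y: "Max ?W < y" "y < z"
      "poly p z - poly p (Max ?W) = (z - Max ?W) * poly (pderiv p) y"
      using poly_MVT[of "Max ?W" z p] \<open>Max ?W < z\<close> by auto
    moreover have "w < y" if "w \<in> Z" "w < z" for w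
      using Max_ge[OF W(1), of w] that y(1) by simp
    ultimately show ?thesis using assms(2) \<open>z \<in> Z\<close> by auto
  qed
  then show thesis using that by metis
qed

lemma card_above_le_gap_points:
  fixes Z :: "'a::linorder set"
  defines "Y \<equiv> Z - {Min Z}"
  assumes "finite Z" and gap: "\<And>z. z \<in> Y \<Longrightarrow> \<rho> z < z \<and> (\<forall>w\<in>Z. w < z \<longrightarrow> w < \<rho> z)"
  shows "card {z\<in>Z. a < z} \<le> card {z\<in>Y. a < \<rho> z} + 1"
proof (cases "{z\<in>Z. a < z} = {}")
  case False
  let ?T = "{z\<in>Z. a < z}"
  have T: "finite ?T" "Min ?T \<in> ?T" using assms(2) Min_in[OF _ False] by auto
  have "?T - {Min ?T} \<subseteq> {z\<in>Y. a < \<rho> z}"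
  proof
    fix z assume z: "z \<in> ?T - {Min ?T}"
    then have "Min ?T \<le> z" "z \<noteq> Min ?T" using T(1) by auto
    then have "Min ?T < z" by simp
    moreover have "Min Z \<le> Min ?T" using T(2) assms(2) by simp
    ultimately have "z \<in> Y" "Min ?T < \<rho> z" using z T(2) gap[of z] by (auto simp: Y_def)
    then show "z \<in> {z\<in>Y. a < \<rho> z}" using T(2) by auto
  qed
  then have "card (?T - {Min ?T}) \<le> card {z\<in>Y. a < \<rho> z}"
    using assms(2) by (intro card_mono) (auto simp: Y_def)
  then show ?thesis using T by simp
qed (simp only: card.empty)

lemma gap_points_interlace:
  fixes Z :: "'a::linorder set"
  defines "Y \<equiv> Z - {Min Z}"
  assumes "finite Z" and gap: "\<And>z. z \<in> Y \<Longrightarrow> \<rho> z < z \<and> (\<forall>w\<in>Z. w < z \<longrightarrow> w < \<rho> z)"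
  shows "inj_on \<rho> Y" "\<rho> ` Y \<inter> Z = {}" "interlaces (mset_set (\<rho> ` Y)) (mset_set Z)"
proof -
  show inj: "inj_on \<rho> Y"
  proof (rule linorder_inj_onI')
    fix z z' assume "z \<in> Y" "z' \<in> Y" "z < z'"
    with gap show "\<rho> z \<noteq> \<rho> z'" by (metis Y_def DiffD1 order.asym)
  qed
  show "\<rho> ` Y \<inter> Z = {}" using gap by fastforce
  show "interlaces (mset_set (\<rho> ` Y)) (mset_set Z)"
    unfolding interlaces_def
  proof
    fix a
    have "{y\<in>\<rho> ` Y. a < y} = \<rho> ` {z\<in>Y. a < \<rho> z}" by blast
    moreover have "inj_on \<rho> {z\<in>Y. a < \<rho> z}" using inj by (rule inj_on_subset) blast
    ultimately have "count_greater (mset_set (\<rho> ` Y)) a = card {z\<in>Y. a < \<rho> z}"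
      using assms(2) by (simp add: count_greater_mset_set card_image Y_def)
    moreover have "{z\<in>Y. a < \<rho> z} \<subseteq> {z\<in>Z. a < z}" using gap by (force simp: Y_def)
    ultimately show "count_greater (mset_set (\<rho> ` Y)) a \<le> count_greater (mset_set Z) a \<and>
        count_greater (mset_set Z) a \<le> count_greater (mset_set (\<rho> ` Y)) a + 1"
      using card_above_le_gap_points[OF assms(2) gap, of a, folded Y_def] assms(2)
      by (simp add: count_greater_mset_set card_mono)
  qed
qed

text \<open>Rolle: the multiple roots of \<open>p\<close> lose one multiplicity in \<open>p'\<close>, and \<open>p'\<close> gains a root
  in each gap between distinct roots; counting degrees shows that these are all roots of \<open>p'\<close>.\<close>
lemma proots_pderiv_gap_points:
  fixes p :: "real poly"
  defines "Z \<equiv> set_mset (proots p)"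
  defines "Y \<equiv> Z - {Min Z}"
  assumes p: "real_rooted p" "degree p > 0"
    and \<rho>: "\<And>z. z \<in> Y \<Longrightarrow> \<rho> z < z \<and> (\<forall>w\<in>Z. w < z \<longrightarrow> w < \<rho> z) \<and> poly (pderiv p) (\<rho> z) = 0"
  shows "proots (pderiv p) = (proots p - mset_set Z) + mset_set (\<rho> ` Y)" "real_rooted (pderiv p)"
proof -
  define M' where "M' = (proots p - mset_set Z) + mset_set (\<rho> ` Y)"
  have p0: "p \<noteq> 0" "pderiv p \<noteq> 0" using p by (auto simp: real_rooted_def pderiv_eq_0_iff)
  have Z: "finite Z" "Z \<noteq> {}" using p by (auto simp: Z_def real_rooted_def simp del: set_count_proots)
  note gap = gap_points_interlace[of Z \<rho>, folded Y_def, OF Z(1)]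
  have sub: "mset_set Z \<subseteq># proots p" unfolding Z_def by (rule mset_set_set_mset_msubset)
  have "count M' x \<le> order x (pderiv p)" for x
  proof (cases "x \<in> Z")
    case True
    then have "x \<notin> \<rho> ` Y" using gap(2) \<rho> by blast
    with True Z(1) p0 have "count M' x = order x p - 1" by (simp add: M'_def Z_def)
    with order_pderiv[OF p0(1)] True p0 show ?thesis by (simp add: Z_def)
  next
    case False
    moreover have "order x (pderiv p) \<ge> 1" if "x \<in> \<rho> ` Y"
      using that \<rho> p0(2) order_root by (fastforce simp: Suc_le_eq)
    moreover have "finite (\<rho> ` Y)" using Z(1) by (simp add: Y_def)
    ultimately show ?thesis
      by (cases "x \<in> \<rho> ` Y") (simp_all add: M'_def count_mset_set Z_def not_in_iff)
  qed
  then have "M' \<subseteq># proots (pderiv p)" using p0 by (simp add: subseteq_mset_def)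
  moreover have size: "size M' = degree (pderiv p)"
  proof -
    have "card (\<rho> ` Y) = card Z - 1"
      using gap(1) \<rho> Z Min_in[OF Z(1,2)] by (simp add: card_image Y_def)
    moreover have "card Z \<ge> 1" "card Z \<le> size (proots p)"
      using Z size_mset_mono[OF sub] by (auto simp: Suc_le_eq card_gt_0_iff)
    ultimately show ?thesis
      using size_Diff_submset[OF sub] Z(1) p by (simp add: M'_def real_rooted_def degree_pderiv)
  qed
  ultimately have "M' = proots (pderiv p)"
    using size_proots_le[of "pderiv p"] by (metis mset_subset_size subset_mset.le_less not_le)
  then show "proots (pderiv p) = (proots p - mset_set Z) + mset_set (\<rho> ` Y)"
    and "real_rooted (pderiv p)"
    using size p0(2) by (simp_all add: M'_def real_rooted_def)
qed

theorem real_rooted_pderiv: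
  assumes "real_rooted p" "degree p > 0"
  shows "real_rooted (pderiv p) \<and> interlaces (proots (pderiv p)) (proots p)"
proof -
  define Z where "Z = set_mset (proots p)"
  have "finite Z" "\<And>x. x \<in> Z \<Longrightarrow> poly p x = 0"
    using assms(1) by (simp add: Z_def del: set_count_proots, auto simp: Z_def real_rooted_def)
  then obtain \<rho> where \<rho>: "\<And>z. z \<in> Z - {Min Z} \<Longrightarrow>
      \<rho> z < z \<and> (\<forall>w\<in>Z. w < z \<longrightarrow> w < \<rho> z) \<and> poly (pderiv p) (\<rho> z) = 0"
    using pderiv_gap_roots[of Z p] by blast
  have p': "proots (pderiv p) = (proots p - mset_set Z) + mset_set (\<rho> ` (Z - {Min Z}))"
    "real_rooted (pderiv p)"
    using proots_pderiv_gap_points[OF assms, of \<rho>] \<rho> by (simp_all add: Z_def)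
  have "interlaces (mset_set (\<rho> ` (Z - {Min Z}))) (mset_set Z)"
    using gap_points_interlace[OF \<open>finite Z\<close>, of \<rho>] \<rho> by blast
  then have "interlaces (proots (pderiv p)) (proots p - mset_set Z + mset_set Z)"
    unfolding p'(1) by (rule interlaces_add_left)
  moreover have "proots p - mset_set Z + mset_set Z = proots p"
    unfolding Z_def by (rule subset_mset.diff_add[OF mset_set_set_mset_msubset])
  ultimately show ?thesis using p'(2) by simp
qed

lemma pderiv_linear_power_mult:
  fixes c :: "'a::idom"
  assumes "m > 0"
  shows "pderiv ([:-c, 1:] ^ m * B) = [:-c, 1:] ^ (m - 1) * (smult (of_nat m) B + [:-c, 1:] * pderiv B)"
proof -
  define x where "x = [:-c, 1:]"
  have xm: "x ^ m = x ^ (m - 1) * x" using assms by (cases m) (simp_all add: mult.commute)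
  have "pderiv (x ^ m) = smult (of_nat m) (x ^ (m - 1))"
    by (simp add: pderiv_power x_def pderiv_pCons)
  then show ?thesis
    unfolding x_def[symmetric] pderiv_mult xm by (simp add: algebra_simps)
qed

text \<open>\<open>F\<close> below is \<open>(t - c)\<^sup>1\<^sup>-\<^sup>m (d/dt) ((t - c)\<^sup>m B)\<close>, so Rolle's theorem applies to it.\<close>
lemma real_rooted_shifted_euler:
  fixes B :: "real poly" and c :: real and m :: nat
  defines "F \<equiv> smult (of_nat m) B + [:-c, 1:] * pderiv B"
  assumes B: "real_rooted B" "lead_coeff B > 0" "degree B > 0" and m: "m > 0"
  shows "real_rooted F" "lead_coeff F > 0"
    and "interlaces (replicate_mset (m - 1) c + proots F) (replicate_mset m c + proots B)"
proof -
  define x where "x = [:-c, 1:]"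
  have x: "x \<noteq> 0" "degree x = 1" "lead_coeff x = 1" by (simp_all add: x_def)
  define H where "H = x ^ m * B"
  have dH: "pderiv H = x ^ (m - 1) * F"
    unfolding H_def F_def x_def using m by (rule pderiv_linear_power_mult)
  have "B \<noteq> 0" using B(1) by (simp add: real_rooted_def)
  then have H: "real_rooted H" "degree H > 0"
    using B by (simp_all add: H_def x_def real_rooted_mult_iff real_rooted_linear_power degree_mult_eq
        degree_power_eq)
  from real_rooted_pderiv[OF H] have "real_rooted (x ^ (m - 1) * F)"
    and iH: "interlaces (proots (x ^ (m - 1) * F)) (proots H)"
    by (simp_all add: dH)
  then show F: "real_rooted F" by (simp add: real_rooted_mult_iff)
  then have "F \<noteq> 0" by (simp add: real_rooted_def)
  then show "interlaces (replicate_mset (m - 1) c + proots F) (replicate_mset m c + proots B)"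
    using iH \<open>B \<noteq> 0\<close> by (simp add: H_def x_def proots_mult proots_power)
  have "lead_coeff (x * pderiv B) = lead_coeff (pderiv B)"
    using x(3) by (simp only: lead_coeff_mult mult_1)
  moreover have "degree (x * pderiv B) = degree B"
    using B(3) x(1,2) by (simp add: degree_mult_eq degree_pderiv pderiv_eq_0_iff)
  moreover have "degree F = degree B"
    using arg_cong[OF dH, of degree] m \<open>B \<noteq> 0\<close> \<open>F \<noteq> 0\<close>
    by (simp add: H_def x_def degree_pderiv degree_mult_eq degree_power_eq)
  ultimately have "lead_coeff F = of_nat m * lead_coeff B + lead_coeff (pderiv B)"
    by (simp add: F_def x_def)
  with B(2,3) show "lead_coeff F > 0" by (simp add: lead_coeff_pderiv add_nonneg_pos)
qed

lemma mult_pos_shift: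
  fixes y P s m :: real
  assumes "0 < y * P" "0 < s" "0 \<le> m"
  shows "0 < y * (m * P + y * s)"
proof -
  have "y * (m * P + y * s) = m * (y * P) + y\<^sup>2 * s" by (simp add: algebra_simps power2_eq_square)
  moreover have "y \<noteq> 0" using assms(1) by auto
  ultimately show ?thesis using assms by (simp add: add_nonneg_pos)
qed

theorem pderiv_interlaces_shifted_euler:
  fixes B :: "real poly" and c :: real and m :: nat
  defines "F \<equiv> smult (of_nat m) B + [:-c, 1:] * pderiv B"
  assumes B: "real_rooted B" "lead_coeff B > 0" "degree B > 0" and m: "m > 0"
  shows "interlaces (proots (pderiv B)) (proots F)"
proof -
  note F = real_rooted_shifted_euler[OF B m, of c, folded F_def]
  obtain B': "real_rooted (pderiv B)" and iB: "interlaces (proots (pderiv B)) (proots B)"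
    using real_rooted_pderiv[OF B(1,3)] by blast
  have lcB': "lead_coeff (pderiv B) > 0" using B(2,3) by (simp add: lead_coeff_pderiv)
  define S where "S = set_mset (proots B) \<union> set_mset (proots (pderiv B)) \<union> set_mset (proots F) \<union> {c}"
  show ?thesis
  proof (rule interlacesI_cofinite[of S])
    fix a assume "a \<notin> S"
    then have nz: "poly B a \<noteq> 0" "poly (pderiv B) a \<noteq> 0" "poly F a \<noteq> 0" "a \<noteq> c"
      using B(1) B' F(1) by (auto simp: S_def real_rooted_def)
    define nB nB' nF where "nB = count_greater (proots B) a"
      and "nB' = count_greater (proots (pderiv B)) a" and "nF = count_greater (proots F) a"
    have "nB' \<le> nB" "nB \<le> nB' + 1"
      using iB by (simp_all add: interlaces_def nB_def nB'_def)
    moreover have "nF + (if a < c then m - 1 else 0) \<le> nB + (if a < c then m else 0)"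
      "nB + (if a < c then m else 0) \<le> nF + (if a < c then m - 1 else 0) + 1"
      using F(3)[unfolded interlaces_def, rule_format, of a]
      by (auto simp: nB_def nF_def split: if_splits)
    moreover have "(c < a \<longrightarrow> (even nB \<longleftrightarrow> even nB') \<longrightarrow> (even nF \<longleftrightarrow> even nB')) \<and>
        (a < c \<longrightarrow> \<not> (even nB \<longleftrightarrow> even nB') \<longrightarrow> \<not> (even nF \<longleftrightarrow> even nB'))"
    proof -
      define P Q where "P = poly B a * poly (pderiv B) a" and "Q = poly F a * poly (pderiv B) a"
      have "0 < P \<longleftrightarrow> (even nB \<longleftrightarrow> even nB')" "0 < Q \<longleftrightarrow> (even nF \<longleftrightarrow> even nB')"
        using real_rooted_pos_iff[OF B(1,2) nz(1)] real_rooted_pos_iff[OF B' lcB' nz(2)]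
          real_rooted_pos_iff[OF F(1,2) nz(3)] nz(1-3)
        by (auto simp: nB_def nB'_def nF_def P_def Q_def zero_less_mult_iff)
      moreover have "Q = of_nat m * P + (a - c) * (poly (pderiv B) a)\<^sup>2"
        by (simp add: P_def Q_def F_def algebra_simps power2_eq_square)
      then have "0 < (a - c) * Q" if "0 < (a - c) * P"
        using mult_pos_shift[OF that, of "(poly (pderiv B) a)\<^sup>2" "of_nat m"] nz by simp
      moreover have "P \<noteq> 0" "Q \<noteq> 0" using nz by (simp_all add: P_def Q_def)
      ultimately show ?thesis by (auto simp: zero_less_mult_iff)
    qed
    ultimately show "nB' \<le> nF \<and> nF \<le> nB' + 1"
      using nz(4) m by (cases "a < c") (simp_all, presburger+)
  qed (auto simp: S_def)
qed

section \<open>Elementary symmetric polynomials of shifted variables\<close>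

definition esym_poly :: "'a set \<Rightarrow> ('a \<Rightarrow> 'b::comm_ring_1) \<Rightarrow> nat \<Rightarrow> 'b poly" where
  "esym_poly A r k = (\<Sum>S | S \<subseteq> A \<and> card S = k. \<Prod>i\<in>S. [:r i, 1:])"

lemma esym_poly_0 [simp]: "finite A \<Longrightarrow> esym_poly A r 0 = 1"
proof -
  assume "finite A"
  then have "{S. S \<subseteq> A \<and> card S = 0} = {{}}" by (auto dest: finite_subset)
  then show ?thesis by (simp add: esym_poly_def)
qed

lemma esym_poly_eq_0: "finite A \<Longrightarrow> card A < k \<Longrightarrow> esym_poly A r k = 0"
  unfolding esym_poly_def by (rule sum.neutral) (auto dest: card_mono)

lemma esym_poly_card: "finite A \<Longrightarrow> esym_poly A r (card A) = (\<Prod>i\<in>A. [:r i, 1:])"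
proof -
  assume "finite A"
  then have "{S. S \<subseteq> A \<and> card S = card A} = {A}" using card_subset_eq by blast
  then show ?thesis by (simp add: esym_poly_def)
qed

lemma subsets_card_Suc_insert:
  assumes "finite A" "a \<notin> A"
  shows "{S. S \<subseteq> insert a A \<and> card S = Suc k} =
    {S. S \<subseteq> A \<and> card S = Suc k} \<union> insert a ` {S. S \<subseteq> A \<and> card S = k}"
proof (intro set_eqI)
  fix S
  show "S \<in> {S. S \<subseteq> insert a A \<and> card S = Suc k} \<longleftrightarrow>
      S \<in> {S. S \<subseteq> A \<and> card S = Suc k} \<union> insert a ` {S. S \<subseteq> A \<and> card S = k}"
  proof (cases "a \<in> S")
    case True
    have "S \<subseteq> insert a A \<longleftrightarrow> S - {a} \<subseteq> A" by blast
    moreover have "card S = Suc (card (S - {a}))" if "S - {a} \<subseteq> A"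
    proof -
      have "finite S" using that assms(1) finite_subset by fastforce
      then show ?thesis using True by (rule card_Suc_Diff1[symmetric])
    qed
    moreover have "S \<in> insert a ` {S. S \<subseteq> A \<and> card S = k} \<longleftrightarrow> S - {a} \<in> {S. S \<subseteq> A \<and> card S = k}"
      using True assms(2) by (subst in_image_insert_iff) auto
    ultimately show ?thesis using True assms(2) by auto
  qed auto
qed

lemma esym_poly_insert:
  assumes "finite A" "a \<notin> A"
  shows "esym_poly (insert a A) r (Suc k) = esym_poly A r (Suc k) + [:r a, 1:] * esym_poly A r k"
proof -
  let ?P = "\<lambda>k. {S. S \<subseteq> A \<and> card S = k}"
  have fin: "finite (?P k)" for k
    by (rule finite_subset[of _ "Pow A"]) (use assms(1) in auto)
  have "?P (Suc k) \<inter> insert a ` ?P k = {}" using assms(2) by auto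
  moreover have "inj_on (insert a) (?P k)"
    using assms(2) by (intro inj_onI) (metis Diff_insert_absorb in_mono mem_Collect_eq)
  ultimately have "esym_poly (insert a A) r (Suc k) =
      esym_poly A r (Suc k) + (\<Sum>S\<in>?P k. \<Prod>i\<in>insert a S. [:r i, 1:])"
    by (simp add: esym_poly_def subsets_card_Suc_insert[OF assms] sum.union_disjoint fin sum.reindex)
  also have "(\<Sum>S\<in>?P k. \<Prod>i\<in>insert a S. [:r i, 1:]) = [:r a, 1:] * esym_poly A r k"
    unfolding esym_poly_def sum_distrib_left
  proof (intro sum.cong refl)
    fix S assume "S \<in> ?P k"
    then have "finite S" "a \<notin> S" using assms finite_subset by auto
    then show "(\<Prod>i\<in>insert a S. [:r i, 1:]) = [:r a, 1:] * (\<Prod>i\<in>S. [:r i, 1:])"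
      by (simp del: mult_pCons_left)
  qed
  finally show ?thesis .
qed

lemma pderiv_esym_poly:
  assumes "finite A"
  shows "pderiv (esym_poly A r (Suc k)) = smult (of_nat (card A - k)) (esym_poly A r k)"
  using assms
proof (induction A arbitrary: k rule: finite_induct)
  case empty
  then show ?case by (simp add: esym_poly_eq_0)
next
  case (insert a A)
  define x where "x = [:r a, 1:]"
  have x: "pderiv x = 1" by (simp add: x_def pderiv_pCons)
  have step: "pderiv (esym_poly (insert a A) r (Suc k)) =
      smult (of_nat (card A - k)) (esym_poly A r k) + esym_poly A r k + x * pderiv (esym_poly A r k)"
    by (simp add: esym_poly_insert[OF insert.hyps(1,2)] x_def[symmetric] pderiv_add pderiv_mult x
        insert.IH add_ac)
  have shift: "smult (of_nat (card A - k)) (esym_poly A r k) + esym_poly A r k =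
      smult (of_nat (Suc (card A) - k)) (esym_poly A r k)"
  proof (cases "k \<le> card A")
    case True
    then show ?thesis by (simp add: Suc_diff_le smult_add_left)
  qed (simp add: esym_poly_eq_0 insert.hyps(1))
  show ?case
  proof (cases k)
    case 0
    with step shift insert.hyps show ?thesis by simp
  next
    case (Suc j)
    have "pderiv (esym_poly A r k) = smult (of_nat (Suc (card A) - k)) (esym_poly A r j)"
      using insert.IH[of j] Suc by simp
    with step shift have "pderiv (esym_poly (insert a A) r (Suc k)) =
        smult (of_nat (Suc (card A) - k)) (esym_poly A r k + x * esym_poly A r j)"
      by (simp only: smult_add_right mult_smult_right)
    also have "esym_poly A r k + x * esym_poly A r j = esym_poly (insert a A) r k"
      unfolding Suc x_def by (rule esym_poly_insert[OF insert.hyps(1,2), symmetric])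
    finally show ?thesis using insert.hyps by simp
  qed
qed

lemma esym_poly_remove:
  assumes "finite A" "i \<in> A"
  shows "esym_poly A r (Suc k) = esym_poly (A - {i}) r (Suc k) + [:r i, 1:] * esym_poly (A - {i}) r k"
  using esym_poly_insert[of "A - {i}" i r k] assms by (simp add: insert_absorb)

lemma alternating_sum_esym_poly:
  assumes "finite A" "i \<in> A"
  shows "(\<Sum>j<Suc k. smult ((-1) ^ j) (esym_poly A r (k - j) * [:r i, 1:] ^ j)) = esym_poly (A - {i}) r k"
proof (induction k)
  case 0
  then show ?case using assms by simp
next
  case (Suc k)
  let ?x = "[:r i, 1:]"
  have "(\<Sum>j<Suc (Suc k). smult ((-1) ^ j) (esym_poly A r (Suc k - j) * ?x ^ j)) =
      esym_poly A r (Suc k) - ?x * (\<Sum>j<Suc k. smult ((-1) ^ j) (esym_poly A r (k - j) * ?x ^ j))"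
    by (simp only: sum.lessThan_Suc_shift) (simp add: sum_distrib_left algebra_simps sum_negf del: mult_pCons_left)
  also have "\<dots> = esym_poly (A - {i}) r (Suc k)"
    using Suc esym_poly_remove[OF assms, of r k] by simp
  finally show ?case .
qed

lemma esym_poly_real_rooted:
  fixes r :: "'a \<Rightarrow> real"
  assumes "finite A" "k \<le> card A"
  shows "real_rooted (esym_poly A r k) \<and> lead_coeff (esym_poly A r k) > 0 \<and> degree (esym_poly A r k) = k"
  using assms(2)
proof (induction "card A - k" arbitrary: k)
  case 0
  then have "k = card A" by simp
  moreover have "lead_coeff (\<Prod>i\<in>A. [:r i, 1:]) = 1"
    by (simp only: lead_coeff_prod) simp
  ultimately show ?case
    using assms(1) by (simp add: esym_poly_card real_rooted_prod real_rooted_linear degree_prod_sum_eq)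
next
  case (Suc d)
  then have "card A - k > 0" by simp
  have "d = card A - Suc k" "Suc k \<le> card A" using Suc.hyps(2) by arith+
  then have IH: "real_rooted (esym_poly A r (Suc k))" "lead_coeff (esym_poly A r (Suc k)) > 0"
    "degree (esym_poly A r (Suc k)) = Suc k"
    using Suc.hyps(1) by blast+
  have "esym_poly A r k = smult (inverse (of_nat (card A - k))) (pderiv (esym_poly A r (Suc k)))"
    using \<open>card A - k > 0\<close> by (simp add: pderiv_esym_poly[OF assms(1)])
  moreover have "lead_coeff (pderiv (esym_poly A r (Suc k))) > 0"
    using IH(2,3) by (simp only: lead_coeff_pderiv) simp
  moreover have "degree (pderiv (esym_poly A r (Suc k))) = k"
    using IH(3) by (simp add: degree_pderiv)
  ultimately show ?case
    using real_rooted_pderiv[OF IH(1)] IH(3) \<open>card A - k > 0\<close>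
    by (simp add: real_rooted_smult_iff)
qed

theorem esym_poly_remove_interlaces:
  fixes r :: "'a \<Rightarrow> real"
  assumes "finite A" "i \<in> A" "k < card A"
  shows "interlaces (proots (esym_poly (A - {i}) r k)) (proots (esym_poly A r (Suc k)))"
proof -
  define f g B where "f = esym_poly A r (Suc k)" and "g = esym_poly (A - {i}) r k"
    and "B = esym_poly (A - {i}) r (Suc k)"
  have A': "finite (A - {i})" "card (A - {i}) = card A - 1" using assms(1,2) by simp_all
  have f: "f = B + [:r i, 1:] * g" using esym_poly_remove[OF assms(1,2)] by (simp add: f_def g_def B_def)
  have "real_rooted g" using esym_poly_real_rooted[OF A'(1), of k r] A' assms(3) by (simp add: g_def)
  then have "g \<noteq> 0" by (simp add: real_rooted_def)
  show ?thesis
  proof (cases "Suc k = card A")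
    case True
    then have "B = 0" using A' by (simp add: B_def esym_poly_eq_0)
    with f \<open>g \<noteq> 0\<close> have "proots f = add_mset (- r i) (proots g)"
      by (simp add: proots_mult del: mult_pCons_left)
    then show ?thesis by (simp add: f_def g_def interlaces_add_mset)
  next
    case False
    define m where "m = card A - Suc k"
    have "m > 0" "Suc k \<le> card (A - {i})" using False assms(3) A' by (auto simp: m_def)
    then have "real_rooted B" "lead_coeff B > 0" "degree B = Suc k"
      using esym_poly_real_rooted[OF A'(1)] unfolding B_def by blast+
    then have B: "real_rooted B" "lead_coeff B > 0" "degree B > 0" by simp_all
    have dB: "pderiv B = smult (of_nat m) g"
      using pderiv_esym_poly[OF A'(1), of r k] A' by (simp add: B_def g_def m_def)
    have "smult (of_nat m) B + [:- (- r i), 1:] * pderiv B = smult (of_nat m) f"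
      by (simp add: f dB smult_add_right del: mult_pCons_left)
    with pderiv_interlaces_shifted_euler[OF B \<open>m > 0\<close>, of "- r i"]
    have "interlaces (proots (pderiv B)) (proots (smult (of_nat m) f))" by simp
    then show ?thesis using \<open>m > 0\<close> dB by (simp add: f_def g_def)
  qed
qed

lemma sigma_poly_eq_esym_poly: "sigma_poly n r k = esym_poly {1..n} r k"
  by (simp add: sigma_poly_def esym_poly_def)

lemma q_poly_eq_esym_poly:
  assumes "i \<in> {1..n}"
  shows "q_poly n r i (Suc k) = esym_poly ({1..n} - {i}) r k"
  using alternating_sum_esym_poly[of "{1..n}" i r k] assms
  by (simp add: q_poly_def sigma_poly_eq_esym_poly)

lemma is_root_list_iff: "is_root_list p xs \<longleftrightarrow> p \<noteq> 0 \<and> mset xs = proots p"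
  by (auto simp: is_root_list_def multiset_eq_iff)

theorem lemma2p8:
  fixes n i k :: nat and r :: "nat \<Rightarrow> real" and u v :: "real list"
  assumes "i \<in> {1..n}" and "k \<in> {1..n}"
    and "length u = k" and "sorted_wrt (\<ge>) u" and "is_root_list (sigma_poly n r k) u"
    and "length v = k - 1" and "sorted_wrt (\<ge>) v" and "is_root_list (q_poly n r i k) v"
  shows "\<forall>j < k - 1. u ! (j + 1) \<le> v ! j \<and> v ! j \<le> u ! j"
proof -
  obtain k0 where k: "k = Suc k0" using assms(2) by (cases k) auto
  have "mset u = proots (esym_poly {1..n} r (Suc k0))"
    using assms(5) by (simp add: is_root_list_iff sigma_poly_eq_esym_poly k)
  moreover have "mset v = proots (esym_poly ({1..n} - {i}) r k0)"
    using assms(8) assms(1) by (simp add: is_root_list_iff q_poly_eq_esym_poly k)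
  moreover have "interlaces (proots (esym_poly ({1..n} - {i}) r k0)) (proots (esym_poly {1..n} r (Suc k0)))"
    using esym_poly_remove_interlaces[of "{1..n}" i k0 r] assms(1,2) k by simp
  ultimately show ?thesis using interlaces_nth[OF assms(4,7,3,6)] by simp
qed

end
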